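(* Let $a,b$ be integers with $0<b<a$, let $S=\langle a,a+1,\ldots,a+b\rangle$ with conductor $c$, and let $m\ge 2c-1$. Let $M$ be an $(S,m,r)$-amenable set whose shadow $L_M$ is not the whole ground. Then there exists an $(S,m,r)$-amenable set $N$ whose shadow $L_N$ does not contain $m+a+b-1$ and satisfies $\sharp L_N\le\sharp L_M$.
   Context: For $x\in S$, $\mathrm D(x)=\{\alpha\in S\mid x-\alpha\in S\}$. A set $M=\{m_1<\cdots<m_r\}\subseteq S$ with $2c-1\le m=m_1$ is $(S,m,r)$-amenable if $\mathrm D(m_i)\cap[m,\infty)\subseteq M$ for all $i$. The ground is $\{m,m+1,\ldots,m+a+b-1\}$, and the shadow of $M$ is $M\cap\{m,\ldots,m+a+b-1\}$. *)

theory Defs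
  imports Main
begin

inductive_set gen_semigroup :: "nat set \<Rightarrow> nat set" for G :: "nat set" where
  zero: "0 \<in> gen_semigroup G"
| add: "x \<in> gen_semigroup G \<Longrightarrow> g \<in> G \<Longrightarrow> x + g \<in> gen_semigroup G"

definition interval_semigroup :: "nat \<Rightarrow> nat \<Rightarrow> nat set" where
  "interval_semigroup a b = gen_semigroup {a..a+b}"

definition conductor :: "nat set \<Rightarrow> nat" where
  "conductor S = (LEAST c. \<forall>n\<ge>c. n \<in> S)"

text \<open>D(x) = {alpha in S | x - alpha in S} (x - alpha must be a natural number).\<close>
definition Dset :: "nat set \<Rightarrow> nat \<Rightarrow> nat set" where
  "Dset S x = {\<alpha> \<in> S. \<alpha> \<le> x \<and> x - \<alpha> \<in> S}"

definition amenable :: "nat set \<Rightarrow> nat \<Rightarrow> nat \<Rightarrow> nat set \<Rightarrow> bool" where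
  "amenable S m r M \<longleftrightarrow> finite M \<and> card M = r \<and> M \<subseteq> S \<and> m \<in> M \<and> (\<forall>x\<in>M. m \<le> x)
     \<and> 2 * conductor S \<le> m + 1
     \<and> (\<forall>x\<in>M. Dset S x \<inter> {m..} \<subseteq> M)"

definition ground :: "nat \<Rightarrow> nat \<Rightarrow> nat \<Rightarrow> nat set" where
  "ground m a b = {m..m + a + b - 1}"

definition shadow :: "nat \<Rightarrow> nat \<Rightarrow> nat \<Rightarrow> nat set \<Rightarrow> nat set" where
  "shadow m a b M = M \<inter> ground m a b"

end

theory Submission
  imports Defs
begin

text \<open>Write \<open>M = m + D\<close>. Every integer \<open>\<ge> m\<close> lies in S, so M is amenable exactly when D is a
  finite set containing 0 that is down-closed: \<open>y \<in> D\<close> and \<open>y - \<alpha> \<in> S\<close> force \<open>\<alpha> \<in> D\<close>; the shadow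
  of M is \<open>m + (D \<inter> [0, a+b))\<close>. Let j be the size of this shadow and T the set of x with
  \<open>x - \<alpha> \<notin> S\<close> for all \<open>\<alpha> \<in> [j, a+b)\<close>. Then T is down-closed and meets \<open>[0, a+b)\<close> exactly in
  \<open>[0, j)\<close>. Because S contains the ranges \<open>[t a, t(a+b)]\<close>, a gap of D in the ground limits D to at
  most \<open>j - t b\<close> elements in the window \<open>[t(a+b), (t+1)(a+b))\<close>, while T has at least that many.
  So every initial segment of T is at least as large as that of D, and m plus a suitable
  initial segment of T is the required N.\<close>

lemma gen_semigroup_add:
  assumes "x \<in> gen_semigroup G" "y \<in> gen_semigroup G"
  shows "x + y \<in> gen_semigroup G"
  using assms(2)
proof (induction rule: gen_semigroup.induct)
  case zero
  then show ?case using assms(1) by simp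
next
  case (add y g)
  then show ?case using gen_semigroup.add[of "x + y" G g] by (simp add: add.assoc)
qed

lemma interval_semigroup_iff:
  "x \<in> interval_semigroup a b \<longleftrightarrow> (\<exists>k. k * a \<le> x \<and> x \<le> k * (a + b))"
proof
  assume "x \<in> interval_semigroup a b"
  then show "\<exists>k. k * a \<le> x \<and> x \<le> k * (a + b)"
    unfolding interval_semigroup_def
  proof (induction rule: gen_semigroup.induct)
    case zero
    show ?case by auto
  next
    case (add x g)
    then obtain k where "k * a \<le> x" "x \<le> k * (a + b)" by blast
    with add.hyps(2) have "Suc k * a \<le> x + g \<and> x + g \<le> Suc k * (a + b)" by auto
    then show ?case by blast
  qed
next
  assume "\<exists>k. k * a \<le> x \<and> x \<le> k * (a + b)"
  then obtain k where "k * a \<le> x" "x \<le> k * (a + b)" by blast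
  then show "x \<in> interval_semigroup a b"
    unfolding interval_semigroup_def
  proof (induction k arbitrary: x)
    case 0
    then show ?case by (simp add: gen_semigroup.zero)
  next
    case (Suc k)
    \<comment> \<open>peel off a generator so that the rest lies in the range of k summands\<close>
    define g where "g = max a (x - k * (a + b))"
    have "g \<in> {a..a + b}" "k * a \<le> x - g" "x - g \<le> k * (a + b)" "x = (x - g) + g"
      using Suc.prems by (auto simp: g_def algebra_simps)
    then show ?case by (metis Suc.IH gen_semigroup.add)
  qed
qed

lemma interval_semigroup_add:
  "x \<in> interval_semigroup a b \<Longrightarrow> y \<in> interval_semigroup a b \<Longrightarrow> x + y \<in> interval_semigroup a b"
  unfolding interval_semigroup_def by (rule gen_semigroup_add)

lemma zero_in_interval_semigroup: "0 \<in> interval_semigroup a b"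
  unfolding interval_semigroup_def by (rule gen_semigroup.zero)

lemma interval_semigroup_ge_square:
  assumes "0 < b" "a * a \<le> x"
  shows "x \<in> interval_semigroup a b"
proof (cases "a = 0")
  case True
  then show ?thesis using assms by (auto simp: interval_semigroup_iff intro!: exI[of _ x])
next
  case False
  define k where "k = x div a"
  have "k * a \<le> x" "x < k * a + a"
    using False div_mult_mod_eq[of x a] mod_less_divisor[of a x] unfolding k_def by linarith+
  moreover have "a \<le> k"
    using div_le_mono[OF assms(2), of a] False unfolding k_def by simp
  moreover have "k \<le> k * b" using assms(1) by simp
  ultimately have "k * a \<le> x \<and> x \<le> k * a + k * b" by linarith
  then have "k * a \<le> x \<and> x \<le> k * (a + b)" by (simp add: distrib_left)
  then show ?thesis unfolding interval_semigroup_iff by blast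
qed

lemma mem_if_conductor_le:
  assumes "\<exists>c. \<forall>n\<ge>c. n \<in> S" "conductor S \<le> n"
  shows "n \<in> S"
  using LeastI_ex[OF assms(1)] assms(2) unfolding conductor_def by blast

definition down_closed :: "nat set \<Rightarrow> nat set \<Rightarrow> bool" where
  "down_closed S D \<longleftrightarrow> (\<forall>y\<in>D. \<forall>\<alpha>. \<alpha> \<le> y \<longrightarrow> y - \<alpha> \<in> S \<longrightarrow> \<alpha> \<in> D)"

lemma down_closed_less:
  "down_closed S A \<Longrightarrow> down_closed S {x \<in> A. x < L}"
  unfolding down_closed_def by (auto intro: le_less_trans)

definition avoid_set :: "nat set \<Rightarrow> nat set \<Rightarrow> nat set" where
  "avoid_set S A = {x. \<forall>\<alpha>\<in>A. \<not> (\<alpha> \<le> x \<and> x - \<alpha> \<in> S)}"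

lemma down_closed_avoid_set:
  assumes "\<And>x y. x \<in> S \<Longrightarrow> y \<in> S \<Longrightarrow> x + y \<in> S"
  shows "down_closed S (avoid_set S A)"
  unfolding down_closed_def avoid_set_def
proof (intro ballI allI impI CollectI notI)
  fix x \<alpha> \<beta>
  assume x: "x \<in> {x. \<forall>\<alpha>\<in>A. \<not> (\<alpha> \<le> x \<and> x - \<alpha> \<in> S)}"
    and \<alpha>: "\<alpha> \<le> x" "x - \<alpha> \<in> S" and \<beta>: "\<beta> \<in> A" "\<beta> \<le> \<alpha> \<and> \<alpha> - \<beta> \<in> S"
  have "(x - \<alpha>) + (\<alpha> - \<beta>) \<in> S" using assms \<alpha>(2) \<beta>(2) by blast
  moreover have "(x - \<alpha>) + (\<alpha> - \<beta>) = x - \<beta>" using \<alpha> \<beta> by simp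
  ultimately have "x - \<beta> \<in> S" by simp
  moreover have "\<beta> \<le> x" using \<alpha> \<beta> by simp
  ultimately show False using x \<beta> by blast
qed

lemma avoid_set_le_less:
  assumes "x \<in> avoid_set S {j..n}" "x \<le> n" "0 \<in> S"
  shows "x < j"
proof (rule ccontr)
  assume "\<not> x < j"
  then have "x \<in> {j..n}" "x \<le> x \<and> x - x \<in> S" using assms(2,3) by auto
  then show False using assms(1) unfolding avoid_set_def by blast
qed

lemma image_shift_collect:
  fixes M :: "nat set"
  shows "\<forall>x\<in>M. m \<le> x \<Longrightarrow> M = (+) m ` {y. m + y \<in> M}"
proof (intro equalityI subsetI)
  fix x assume "\<forall>x\<in>M. m \<le> x" "x \<in> M"
  then have "x = m + (x - m)" "m + (x - m) \<in> M" by auto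
  then show "x \<in> (+) m ` {y. m + y \<in> M}" by blast
qed auto

lemma amenable_shift_iff:
  assumes "\<forall>n\<ge>m. n \<in> S" "2 * conductor S \<le> m + 1"
  shows "amenable S m r ((+) m ` D) \<longleftrightarrow> finite D \<and> card D = r \<and> 0 \<in> D \<and> down_closed S D"
proof -
  have inj: "inj ((+) m)" by (simp add: inj_on_def)
  have "(\<forall>x\<in>(+) m ` D. Dset S x \<inter> {m..} \<subseteq> (+) m ` D) \<longleftrightarrow> down_closed S D"
  proof
    assume closed: "\<forall>x\<in>(+) m ` D. Dset S x \<inter> {m..} \<subseteq> (+) m ` D"
    show "down_closed S D"
      unfolding down_closed_def
    proof (intro ballI allI impI)
      fix y \<alpha> assume "y \<in> D" "\<alpha> \<le> y" "y - \<alpha> \<in> S"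
      then have "m + \<alpha> \<in> Dset S (m + y) \<inter> {m..}"
        using assms(1) by (auto simp: Dset_def)
      then have "m + \<alpha> \<in> (+) m ` D" using closed \<open>y \<in> D\<close> by blast
      then show "\<alpha> \<in> D" by auto
    qed
  next
    assume closed: "down_closed S D"
    show "\<forall>x\<in>(+) m ` D. Dset S x \<inter> {m..} \<subseteq> (+) m ` D"
    proof (intro ballI subsetI)
      fix x \<beta> assume "x \<in> (+) m ` D" "\<beta> \<in> Dset S x \<inter> {m..}"
      then obtain y where "y \<in> D" "x = m + y" "m \<le> \<beta>" "\<beta> \<le> x" "x - \<beta> \<in> S"
        by (auto simp: Dset_def)
      moreover from this have "\<beta> - m \<le> y" "y - (\<beta> - m) = x - \<beta>" by auto
      ultimately have "\<beta> - m \<in> D" using closed unfolding down_closed_def by metis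
      then show "\<beta> \<in> (+) m ` D" using \<open>m \<le> \<beta>\<close> by (auto simp: image_iff intro!: bexI[of _ "\<beta> - m"])
    qed
  qed
  moreover have "(+) m ` D \<subseteq> S" "\<forall>x\<in>(+) m ` D. m \<le> x" using assms(1) by auto
  moreover have "m \<in> (+) m ` D \<longleftrightarrow> 0 \<in> D" by force
  moreover have "finite ((+) m ` D) \<longleftrightarrow> finite D" "card ((+) m ` D) = card D"
    using inj by (simp_all add: finite_image_iff card_image inj_on_subset)
  ultimately show ?thesis using assms(2) unfolding amenable_def by argo
qed

lemma ground_eq_image:
  assumes "0 < a + b"
  shows "ground m a b = (+) m ` {..a + b - 1}"
proof (intro equalityI subsetI)
  fix x assume "x \<in> ground m a b"
  then have "x = m + (x - m)" "x - m \<in> {..a + b - 1}" using assms by (auto simp: ground_def)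
  then show "x \<in> (+) m ` {..a + b - 1}" by blast
qed (use assms in \<open>auto simp: ground_def\<close>)

lemma shadow_shift:
  "0 < a + b \<Longrightarrow> shadow m a b ((+) m ` D) = (+) m ` {i \<in> D. i \<le> a + b - 1}"
  unfolding shadow_def ground_eq_image by auto

lemma card_le_if_gap:
  fixes D :: "nat set"
  assumes "g \<le> n" "g \<notin> D"
  shows "card {i \<in> D. i \<le> n} \<le> n"
proof -
  have "card {i \<in> D. i \<le> n} \<le> card ({..n} - {g})" using assms by (intro card_mono) auto
  then show ?thesis using assms by simp
qed

lemma card_less_add_split:
  fixes X :: "nat set"
  shows "card {x \<in> X. x < c + w} = card {x \<in> X. x < c} + card {x \<in> X. c \<le> x \<and> x < c + w}"
proof -
  have "{x \<in> X. x < c + w} = {x \<in> X. x < c} \<union> {x \<in> X. c \<le> x \<and> x < c + w}" by auto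
  moreover have "finite {x \<in> X. x < c}" "finite {x \<in> X. c \<le> x \<and> x < c + w}" by simp_all
  ultimately show ?thesis by (simp add: card_Un_disjoint disjoint_iff)
qed

lemma card_less_attains:
  fixes X :: "nat set"
  assumes "r \<le> card {x \<in> X. x < K}"
  shows "\<exists>L. card {x \<in> X. x < L} = r"
  using assms
proof (induction K)
  case 0
  then show ?case by (intro exI[of _ 0]) simp
next
  case (Suc K)
  have "card {x \<in> X. x < Suc K} \<le> card (insert K {x \<in> X. x < K})"
    by (rule card_mono) auto
  also have "\<dots> \<le> Suc (card {x \<in> X. x < K})" by (simp add: card_insert_if)
  finally have step: "card {x \<in> X. x < Suc K} \<le> Suc (card {x \<in> X. x < K})" .
  show ?case
  proof (cases "r \<le> card {x \<in> X. x < K}")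
    case False
    then have "card {x \<in> X. x < Suc K} = r" using Suc.prems step by linarith
    then show ?thesis by blast
  qed (use Suc.IH in blast)
qed

lemma card_offsets_le_if_below_gap:
  fixes G Q :: "nat set"
  assumes G: "finite G" "G \<noteq> {}" "G \<subseteq> {..n}" and Q: "Q \<subseteq> {..n} - G"
    and "q0 \<in> Q" "q0 < Max G"
    and avoid: "\<And>q \<alpha>. q \<in> Q \<Longrightarrow> \<alpha> \<in> G \<Longrightarrow> \<not> (q \<le> \<alpha> \<and> \<alpha> \<le> q + d)"
  shows "card Q \<le> card ({..n} - G) - d"
proof -
  define q1 where "q1 = Max {q \<in> Q. q < Max G}"
  have fin: "finite {q \<in> Q. q < Max G}" by (rule finite_subset[of _ "{..<Max G}"]) auto
  have q1: "q1 \<in> Q" "q1 < Max G" and q1_max: "\<And>q. q \<in> Q \<Longrightarrow> q < Max G \<Longrightarrow> q \<le> q1"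
    using Max_in[OF fin] Max_ge[OF fin] \<open>q0 \<in> Q\<close> \<open>q0 < Max G\<close> unfolding q1_def by blast+
  have "Max G \<in> G" using G by simp
  then have below: "q1 + d < Max G" using avoid[OF q1(1)] q1(2) by fastforce
  \<comment> \<open>the d offsets right after q1 are neither gaps nor in Q\<close>
  define E where "E = {q1<..q1 + d}"
  have "E \<subseteq> {..n} - G"
  proof
    fix i assume "i \<in> E"
    then have "i < Max G" "q1 \<le> i \<and> i \<le> q1 + d" using below by (auto simp: E_def)
    then show "i \<in> {..n} - G" using avoid[OF q1(1)] \<open>Max G \<in> G\<close> G(3) by fastforce
  qed
  moreover have "Q \<subseteq> ({..n} - G) - E"
    using Q q1_max below by (fastforce simp: E_def)
  ultimately have "card Q \<le> card ({..n} - G) - card E"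
    by (metis card_Diff_subset card_mono finite_Diff finite_atMost finite_subset)
  then show ?thesis by (simp add: E_def)
qed

lemma card_offsets_le_if_above_gaps:
  fixes G Q :: "nat set"
  assumes G: "finite G" "G \<noteq> {}" "G \<subseteq> {..n}" and Q: "Q \<subseteq> {..n} - G" "\<forall>q\<in>Q. Max G \<le> q"
    and "a \<le> n + 1"
    and avoid: "\<And>q \<alpha>. q \<in> Q \<Longrightarrow> \<alpha> \<in> G \<Longrightarrow> q + d < \<alpha> + a"
  shows "card Q \<le> card ({..n} - G) - d"
proof -
  have "Min G \<in> G" "Max G \<in> G" "Min G \<le> Max G" "Max G \<le> n" using G by auto
  have "Q \<subseteq> {Max G<..<Min G + a - d}"
  proof
    fix q assume "q \<in> Q"
    then have "Max G \<le> q" "q \<noteq> Max G" "q + d < Min G + a"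
      using Q avoid[OF _ \<open>Min G \<in> G\<close>] \<open>Max G \<in> G\<close> by auto
    then show "q \<in> {Max G<..<Min G + a - d}" by simp
  qed
  then have "card Q \<le> Min G + a - d - Suc (Max G)"
    using card_mono[of "{Max G<..<Min G + a - d}" Q] by simp
  moreover have "Min G + (n - Max G) \<le> card ({..n} - G)"
  proof -
    have "{..<Min G} \<union> {Max G<..n} \<subseteq> {..n} - G"
    proof
      fix i assume i: "i \<in> {..<Min G} \<union> {Max G<..n}"
      then have "i \<le> n" using \<open>Min G \<le> Max G\<close> \<open>Max G \<le> n\<close> by auto
      moreover have "i \<notin> G" using i Min_le[OF G(1)] Max_ge[OF G(1)] by fastforce
      ultimately show "i \<in> {..n} - G" by simp
    qed
    moreover have "card ({..<Min G} \<union> {Max G<..n}) = Min G + (n - Max G)"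
      using \<open>Min G \<le> Max G\<close> by (subst card_Un_disjoint) auto
    ultimately show ?thesis using card_mono[of "{..n} - G" "{..<Min G} \<union> {Max G<..n}"] by simp
  qed
  ultimately show ?thesis using \<open>a \<le> n + 1\<close> \<open>Max G \<le> n\<close> by linarith
qed

lemma card_offsets_le:
  fixes G Q :: "nat set"
  assumes "G \<noteq> {}" "G \<subseteq> {..n}" "Q \<subseteq> {..n}" "a \<le> n + 1"
    and avoid: "\<And>q \<alpha>. q \<in> Q \<Longrightarrow> \<alpha> \<in> G \<Longrightarrow> \<not> (q \<le> \<alpha> \<and> \<alpha> \<le> q + d) \<and> q + d < \<alpha> + a"
  shows "card Q \<le> card ({..n} - G) - d"
proof -
  have "finite G" using assms(2) finite_subset by blast
  moreover have "Q \<subseteq> {..n} - G" using assms(3) avoid by fastforce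
  ultimately show ?thesis
  proof (cases "\<exists>q\<in>Q. q < Max G")
    case True
    then obtain q0 where "q0 \<in> Q" "q0 < Max G" by blast
    from card_offsets_le_if_below_gap[OF \<open>finite G\<close> assms(1,2) \<open>Q \<subseteq> {..n} - G\<close> this] avoid
    show ?thesis by blast
  next
    case False
    then have "\<forall>q\<in>Q. Max G \<le> q" by (simp add: not_less)
    from card_offsets_le_if_above_gaps[OF \<open>finite G\<close> assms(1,2) \<open>Q \<subseteq> {..n} - G\<close> this assms(4)] avoid
    show ?thesis by blast
  qed
qed

text \<open>For an element \<open>t(a+b) + q\<close> of the window and a gap \<open>\<alpha>\<close> of the ground, the difference
  \<open>t(a+b) + q - \<alpha>\<close> lies neither in \<open>[t a, t(a+b)]\<close> nor in \<open>[(t+1) a, (t+1)(a+b)]\<close>, both contained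
  in S; these are the two conditions on the offsets q in \<open>card_offsets_le\<close>.\<close>
lemma card_window_le:
  fixes D :: "nat set"
  assumes closed: "down_closed (interval_semigroup a b) D" and gap: "g \<le> a + b - 1" "g \<notin> D"
  shows "card {x \<in> D. t * (a + b) \<le> x \<and> x < t * (a + b) + (a + b)}
           \<le> card {i \<in> D. i \<le> a + b - 1} - t * b"
    (is "card ?W \<le> _")
proof -
  define n where "n = a + b - 1"
  define G where "G = {\<alpha>. \<alpha> \<le> n \<and> \<alpha> \<notin> D}"
  define Q where "Q = (\<lambda>x. x - t * (a + b)) ` ?W"
  have in_D: "\<alpha> \<in> D" if "x \<in> D" "\<alpha> \<le> x" "k * a \<le> x - \<alpha>" "x - \<alpha> \<le> k * (a + b)" for x \<alpha> k
    using closed that unfolding down_closed_def interval_semigroup_iff by blast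
  have "card ?W = card Q"
    unfolding Q_def by (rule card_image[symmetric]) (auto simp: inj_on_def)
  also have "card Q \<le> card ({..n} - G) - t * b"
  proof (rule card_offsets_le)
    show "G \<noteq> {}" "G \<subseteq> {..n}" "Q \<subseteq> {..n}" "a \<le> n + 1"
      using gap by (auto simp: G_def Q_def n_def)
    fix q \<alpha> assume "q \<in> Q" "\<alpha> \<in> G"
    then obtain x where x: "x \<in> D" "t * (a + b) \<le> x" "x < t * (a + b) + (a + b)" "q = x - t * (a + b)"
      and \<alpha>: "\<alpha> \<le> n" "\<alpha> \<notin> D"
      by (auto simp: Q_def G_def)
    have tab: "t * (a + b) = t * a + t * b" "(t + 1) * a = t * a + a"
      by (simp_all add: algebra_simps)
    show "\<not> (q \<le> \<alpha> \<and> \<alpha> \<le> q + t * b) \<and> q + t * b < \<alpha> + a"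
    proof (intro conjI notI)
      assume "q \<le> \<alpha> \<and> \<alpha> \<le> q + t * b"
      then have "\<alpha> \<le> x" "t * a \<le> x - \<alpha>" "x - \<alpha> \<le> t * (a + b)" using x(2-4) tab by linarith+
      then show False using in_D[OF x(1)] \<alpha>(2) by blast
    next
      show "q + t * b < \<alpha> + a"
      proof (rule ccontr)
        assume "\<not> q + t * b < \<alpha> + a"
        then have "\<alpha> \<le> x" "(t + 1) * a \<le> x - \<alpha>" "x - \<alpha> \<le> (t + 1) * (a + b)"
          using x(2-4) tab by (linarith, linarith, simp add: algebra_simps)
        then show False using in_D[OF x(1)] \<alpha>(2) by blast
      qed
    qed
  qed
  also have "{..n} - G = {i \<in> D. i \<le> a + b - 1}" by (auto simp: G_def n_def)
  finally show ?thesis .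
qed

lemma card_window_ge:
  assumes "j \<le> a + b - 1"
  shows "j - t * b \<le> card {x \<in> avoid_set (interval_semigroup a b) {j..a + b - 1}.
                           t * (a + b) \<le> x \<and> x < t * (a + b) + (a + b)}"
    (is "_ \<le> card ?W")
proof -
  have tab: "t * (a + b) = t * a + t * b" by (simp add: algebra_simps)
  \<comment> \<open>the first \<open>j - tb\<close> elements of the window lie strictly between the ranges
    \<open>[k a, k (a+b)]\<close> of S reached from the gaps \<open>\<alpha> \<ge> j\<close>\<close>
  have "(+) (t * (a + b)) ` {..<j - t * b} \<subseteq> ?W"
  proof
    fix x assume "x \<in> (+) (t * (a + b)) ` {..<j - t * b}"
    then obtain q where q: "q < j - t * b" and x: "x = t * (a + b) + q" by auto
    have "\<not> (\<alpha> \<le> x \<and> x - \<alpha> \<in> interval_semigroup a b)" if \<alpha>: "j \<le> \<alpha>" "\<alpha> \<le> a + b - 1" for \<alpha>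
    proof
      assume h: "\<alpha> \<le> x \<and> x - \<alpha> \<in> interval_semigroup a b"
      then obtain k where k: "k * a \<le> x - \<alpha>" "x - \<alpha> \<le> k * (a + b)"
        unfolding interval_semigroup_iff by blast
      have "k * a < t * a" using h k q x \<alpha> tab by linarith
      then have "Suc k * (a + b) \<le> t * (a + b)" by (intro mult_le_mono1) simp
      then show False using h k q x \<alpha> by simp
    qed
    then show "x \<in> ?W" using q x assms by (auto simp: avoid_set_def)
  qed
  then have "card ((+) (t * (a + b)) ` {..<j - t * b}) \<le> card ?W"
    by (rule card_mono[rotated]) (rule finite_subset[of _ "{..<t * (a + b) + (a + b)}"], auto)
  then show ?thesis by (simp add: card_image)
qed

lemma card_less_le_avoid_set:
  fixes D :: "nat set"
  assumes "down_closed (interval_semigroup a b) D" "g \<le> a + b - 1" "g \<notin> D"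
  shows "card {x \<in> D. x < K * (a + b)}
           \<le> card {x \<in> avoid_set (interval_semigroup a b) {card {i \<in> D. i \<le> a + b - 1}..a + b - 1}.
                    x < K * (a + b)}"
proof (induction K)
  case 0
  then show ?case by simp
next
  case (Suc K)
  let ?j = "card {i \<in> D. i \<le> a + b - 1}"
  have "card {x \<in> D. K * (a + b) \<le> x \<and> x < K * (a + b) + (a + b)} \<le> ?j - K * b"
    using card_window_le[OF assms] .
  also have "\<dots> \<le> card {x \<in> avoid_set (interval_semigroup a b) {?j..a + b - 1}.
                      K * (a + b) \<le> x \<and> x < K * (a + b) + (a + b)}"
    using card_window_ge card_le_if_gap[OF assms(2,3)] by blast
  finally show ?case
    using Suc.IH by (simp only: mult_Suc card_less_add_split add.commute[of "a + b"])
qed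

lemma down_closed_compression:
  fixes a b g :: nat and D :: "nat set"
  defines "S \<equiv> interval_semigroup a b" and "n \<equiv> a + b - 1"
  assumes "0 < a + b" "finite D" "0 \<in> D" "down_closed S D" "g \<le> n" "g \<notin> D"
  shows "\<exists>T. finite T \<and> card T = card D \<and> 0 \<in> T \<and> down_closed S T
             \<and> n \<notin> T \<and> card {i \<in> T. i \<le> n} \<le> card {i \<in> D. i \<le> n}"
proof -
  define j where "j = card {i \<in> D. i \<le> n}"
  define A where "A = avoid_set S {j..n}"
  have "j \<le> n" unfolding j_def using card_le_if_gap assms(7,8) by blast
  have "0 < j" unfolding j_def using assms(5) by (auto simp: card_gt_0_iff)
  obtain K where "\<forall>x\<in>D. x < K" using assms(4) finite_nat_set_iff_bounded by blast
  moreover have "K \<le> K * (a + b)" using assms(3) by (simp add: Suc_le_eq)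
  ultimately have "{x \<in> D. x < K * (a + b)} = D" by (auto intro: less_le_trans)
  moreover have "card {x \<in> D. x < K * (a + b)} \<le> card {x \<in> A. x < K * (a + b)}"
    unfolding A_def j_def S_def n_def
    by (rule card_less_le_avoid_set) (use assms(6-8) in \<open>simp_all add: S_def n_def\<close>)
  ultimately have "card D \<le> card {x \<in> A. x < K * (a + b)}" by simp
  then obtain L where L: "card {x \<in> A. x < L} = card D" using card_less_attains by blast
  define T where "T = {x \<in> A. x < L}"
  have "0 < card D" using assms(4,5) by (auto simp: card_gt_0_iff)
  then have "0 < L" using L by (intro Nat.gr0I) simp
  have below_j: "i < j" if "i \<in> T" "i \<le> n" for i
    using avoid_set_le_less[of i S j n] zero_in_interval_semigroup that
    unfolding T_def A_def S_def by blast
  show ?thesis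
  proof (intro exI conjI)
    show "finite T" "card T = card D" using L by (simp_all add: T_def)
    show "0 \<in> T" using \<open>0 < L\<close> \<open>0 < j\<close> by (simp add: T_def A_def avoid_set_def)
    show "down_closed S T"
      unfolding T_def A_def S_def by (intro down_closed_less down_closed_avoid_set interval_semigroup_add)
    show "n \<notin> T" using below_j[of n] \<open>j \<le> n\<close> by auto
    have "{i \<in> T. i \<le> n} \<subseteq> {..<j}" using below_j by blast
    then have "card {i \<in> T. i \<le> n} \<le> card {..<j}" by (rule card_mono[rotated]) simp
    then show "card {i \<in> T. i \<le> n} \<le> card {i \<in> D. i \<le> n}" by (simp add: j_def)
  qed
qed

theorem proposition4p24:
  fixes a b m r :: nat and M :: "nat set"
  assumes "0 < b" and "b < a"
    and "2 * conductor (interval_semigroup a b) \<le> m + 1"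
    and "amenable (interval_semigroup a b) m r M"
    and "shadow m a b M \<noteq> ground m a b"
  shows "\<exists>N. amenable (interval_semigroup a b) m r N
           \<and> m + a + b - 1 \<notin> shadow m a b N
           \<and> card (shadow m a b N) \<le> card (shadow m a b M)"
proof -
  let ?S = "interval_semigroup a b" and ?n = "a + b - 1"
  have ab: "0 < a + b" "m + a + b - 1 = m + ?n" using assms(1) by simp_all
  have "conductor ?S \<le> m" using assms(3) by linarith
  then have above: "\<forall>n\<ge>m. n \<in> ?S"
    using mem_if_conductor_le interval_semigroup_ge_square[OF assms(1)] by (meson le_trans)
  define D where "D = {y. m + y \<in> M}"
  have M: "M = (+) m ` D"
    unfolding D_def using assms(4) by (intro image_shift_collect) (simp add: amenable_def)
  then have D: "finite D" "card D = r" "0 \<in> D" "down_closed ?S D"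
    using assms(4) amenable_shift_iff[OF above assms(3)] by simp_all
  obtain g where "g \<le> ?n" "g \<notin> D"
    using assms(5) unfolding M shadow_shift[OF ab(1)] ground_eq_image[OF ab(1)] by blast
  then obtain T where T: "finite T" "card T = card D" "0 \<in> T" "down_closed ?S T" "?n \<notin> T"
      "card {i \<in> T. i \<le> ?n} \<le> card {i \<in> D. i \<le> ?n}"
    using down_closed_compression[OF ab(1) D(1,3,4)] by blast
  show ?thesis
  proof (intro exI conjI)
    show "amenable ?S m r ((+) m ` T)" using T D amenable_shift_iff[OF above assms(3)] by simp
    show "m + a + b - 1 \<notin> shadow m a b ((+) m ` T)"
      unfolding ab(2) shadow_shift[OF ab(1)] using T(5) by auto
    show "card (shadow m a b ((+) m ` T)) \<le> card (shadow m a b M)"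
      unfolding M shadow_shift[OF ab(1)] using T(6) by (simp add: card_image)
  qed
qed

end
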